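(* Let $n,m$ be positive integers, $A_1,\dots,A_m\in\mathbb{S}_n$, $\mathcal{A}(X)=(\langle A_i,X\rangle)_{i=1}^m$, $\mathcal{A}^*(y)=\sum_i y_iA_i$, with $\mathcal{A}\mathcal{A}^*$ invertible; let $b\in\mathbb{R}^m$, $C\in\mathbb{S}_n$, $D:=\mathcal{A}^*((\mathcal{A}\mathcal{A}^* )^{-1}b)$ and $\mathcal{M}=\{S\in\mathbb{S}_n^+:\operatorname{diag}(S)=\mathbf{1}\}$. Fix $\sigma_k>0$, $y^k\in\mathbb{R}^m$, $\widetilde{X}^k\in\mathbb{S}_n$ and let $$\Phi_k(S)=\langle D,S+C\rangle-\langle\widetilde{X}^k,\mathcal{A}^*(y^k)-S-C\rangle+\tfrac{\sigma_k}{2}\|\mathcal{A}^*(y^k)-S-C\|^2 .$$ Then $S\in\mathcal{M}$ is a minimizer of $\Phi_k$ over $\mathcal{M}$ if and only if $$X:=\nabla\Phi_k(S)-\operatorname{Diag}(\nabla\Phi_k(S)S)\succeq0\quad\text{and}\quad XS=0,$$ where $\nabla\Phi_k(S)=\widetilde{X}^k-\sigma_k(\mathcal{A}^*(y^k)-S-C)+D$.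
   Context: $\mathbb{S}_n$ ($\mathbb{S}_n^+$) denotes real symmetric (positive semidefinite) $n\times n$ matrices, $\langle A,B\rangle=\mathrm{Tr}(A^{\intercal}B)$, $\|\cdot\|$ the Frobenius norm. For a square matrix $M$, $\operatorname{diag}(M)$ is the vector of its diagonal entries and $\operatorname{Diag}(M)$ the diagonal matrix with the same diagonal as $M$; $\mathbf{1}$ is the all-ones vector. *)

theory Defs
  imports "HOL-Analysis.Analysis"
begin

text \<open>n x n real matrices are real^'n^'n (n = CARD('n)); R^m is real^'m.\<close>

definition frob_inner :: "real^'n^'n \<Rightarrow> real^'n^'n \<Rightarrow> real" where
  "frob_inner A B = trace (transpose A ** B)"

definition frob_sq :: "real^'n^'n \<Rightarrow> real" where
  "frob_sq A = frob_inner A A"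

definition symmetric_mat :: "real^'n^'n \<Rightarrow> bool" where
  "symmetric_mat A \<longleftrightarrow> transpose A = A"

definition psd :: "real^'n^'n \<Rightarrow> bool" where
  "psd X \<longleftrightarrow> symmetric_mat X \<and> (\<forall>x. 0 \<le> x \<bullet> (X *v x))"

definition Diag_mat :: "real^'n^'n \<Rightarrow> real^'n^'n" where
  "Diag_mat M = (\<chi> i j. if i = j then M $ i $ i else 0)"

definition opA :: "('m \<Rightarrow> real^'n^'n) \<Rightarrow> real^'n^'n \<Rightarrow> real^'m" where
  "opA A X = (\<chi> i. frob_inner (A i) X)"

definition opAstar :: "('m::finite \<Rightarrow> real^'n^'n) \<Rightarrow> real^'m \<Rightarrow> real^'n^'n" where
  "opAstar A y = (\<Sum>i\<in>UNIV. y $ i *\<^sub>R A i)"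

definition AAstar :: "('m \<Rightarrow> real^'n^'n) \<Rightarrow> real^'m^'m" where
  "AAstar A = (\<chi> i j. frob_inner (A i) (A j))"

definition elliptope :: "(real^'n^'n) set" where
  "elliptope = {S. psd S \<and> (\<forall>i. S $ i $ i = 1)}"

end

theory Submission
  imports Defs
begin

text \<open>
  \<open>\<Phi>\<^sub>k\<close> is a convex quadratic with gradient \<open>G\<close> at \<open>S\<close>, so \<open>S\<close> minimizes it over the convex
  set \<open>\<M>\<close> iff \<open>S\<close> minimizes the linear functional \<open>\<langle>G, \<cdot>\<rangle>\<close> over \<open>\<M>\<close>.
  Let \<open>X = G - Diag(GS)\<close>. Since all \<open>T \<in> \<M>\<close> have unit diagonal,
  \<open>\<langle>G, T\<rangle> - \<langle>G, S\<rangle> = \<langle>X, T\<rangle> - \<langle>X, S\<rangle>\<close>, and \<open>\<langle>X, S\<rangle> = tr(XS)\<close>; as the inner product of two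
  PSD matrices is nonnegative, \<open>X \<succeq> 0\<close> and \<open>XS = 0\<close> imply optimality.
  Conversely, if \<open>P(t) = S + tA + t\<^sup>2B\<close> is PSD for \<open>t > 0\<close>, rescaling \<open>P(t)\<close> to unit diagonal
  gives a curve in \<open>\<M>\<close> through \<open>S\<close>, and the derivative of \<open>\<langle>G, \<cdot>\<rangle>\<close> along it at \<open>t = 0\<close> is
  \<open>\<langle>X, A\<rangle> \<ge> 0\<close>. The curves \<open>(I + tY) S (I + tY)\<^sup>T\<close> give \<open>\<langle>X, YS\<rangle> = 0\<close> for all \<open>Y\<close>, hence
  \<open>XS = 0\<close> (take \<open>Y = XS\<close>), and the curves \<open>S + t xx\<^sup>T\<close> give \<open>x\<^sup>T X x \<ge> 0\<close>.
\<close>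

section \<open>Frobenius inner product\<close>

lemma frob_inner_eq_inner: "frob_inner A B = A \<bullet> B"
proof -
  have "frob_inner A B = (\<Sum>i\<in>UNIV. \<Sum>k\<in>UNIV. A$k$i * B$k$i)"
    by (simp add: frob_inner_def trace_def transpose_def matrix_matrix_mult_def)
  also have "\<dots> = A \<bullet> B"
    by (subst sum.swap) (simp add: inner_vec_def)
  finally show ?thesis .
qed

lemma frob_sq_eq_norm: "frob_sq A = (norm A)\<^sup>2"
  by (simp add: frob_sq_def frob_inner_eq_inner power2_norm_eq_inner)

lemma symmetric_mat_iff: "symmetric_mat M \<longleftrightarrow> (\<forall>i j. M$i$j = M$j$i)"
  unfolding symmetric_mat_def transpose_def vec_eq_iff by auto

lemma inner_matrix_eq_sum:
  fixes A B :: "real^'n^'m"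
  shows "A \<bullet> B = (\<Sum>i\<in>UNIV. \<Sum>j\<in>UNIV. A$i$j * B$i$j)"
  by (simp add: inner_vec_def)

lemma quadratic_form_eq_sum: "x \<bullet> (M *v x) = (\<Sum>i\<in>UNIV. \<Sum>j\<in>UNIV. x$i * M$i$j * x$j)"
  by (simp add: inner_vec_def matrix_vector_mult_def sum_distrib_left mult.assoc)

lemma inner_Diag_mat: "Diag_mat M \<bullet> T = (\<Sum>i\<in>UNIV. M$i$i * T$i$i)"
  by (simp add: inner_matrix_eq_sum Diag_mat_def mult_delta_left)

lemma inner_outer_product:
  fixes x :: "real^'n"
  shows "M \<bullet> (\<chi> i j. x$i * x$j) = x \<bullet> (M *v x)"
  by (simp add: inner_matrix_eq_sum quadratic_form_eq_sum mult_ac)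

lemma inner_transpose_right:
  fixes A B :: "real^'n^'n"
  shows "A \<bullet> transpose B = transpose A \<bullet> B"
  by (simp add: inner_matrix_eq_sum transpose_def) (rule sum.swap)

lemma inner_mult_symmetric:
  fixes X Z S :: "real^'n^'n"
  assumes "symmetric_mat S"
  shows "X \<bullet> (Z ** S) = (X ** S) \<bullet> Z"
proof -
  have "X \<bullet> (Z ** S) = trace ((transpose X ** Z) ** S)"
    by (simp add: frob_inner_eq_inner[symmetric] frob_inner_def matrix_mul_assoc)
  also have "\<dots> = trace ((S ** transpose X) ** Z)"
    by (simp add: trace_mul_sym[of _ S] matrix_mul_assoc)
  also have "S ** transpose X = transpose (X ** S)"
    using assms by (simp add: matrix_transpose_mul symmetric_mat_def)
  finally show ?thesis by (simp add: frob_inner_eq_inner[symmetric] frob_inner_def)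
qed

lemma symmetric_opAstar:
  assumes "\<And>i. symmetric_mat (A i)"
  shows "symmetric_mat (opAstar A w)"
  using assms by (simp add: opAstar_def symmetric_mat_iff)

lemma symmetric_diag_correction:
  fixes G S :: "real^'n^'n"
  assumes "symmetric_mat G"
  shows "symmetric_mat (G - Diag_mat (G ** S))"
  using assms by (simp add: symmetric_mat_iff Diag_mat_def)

section \<open>Positive semidefinite matrices\<close>

lemma psd_add: "psd X \<Longrightarrow> psd Y \<Longrightarrow> psd (X + Y)"
  by (simp add: psd_def symmetric_mat_iff matrix_vector_mult_add_rdistrib inner_add_right)

lemma psd_scaleR: "psd X \<Longrightarrow> 0 \<le> c \<Longrightarrow> psd (c *\<^sub>R X)"
  by (simp add: psd_def symmetric_mat_def transpose_scalar scaleR_matrix_vector_assoc[symmetric])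

lemma psd_outer_product:
  fixes x :: "real^'n"
  shows "psd (\<chi> i j. x$i * x$j)"
proof -
  have "z \<bullet> ((\<chi> i j. x$i * x$j) *v z) = (z \<bullet> x)\<^sup>2" for z
    unfolding quadratic_form_eq_sum
    by (simp add: power2_eq_square inner_vec_def sum_product mult_ac)
  then show ?thesis by (simp add: psd_def symmetric_mat_iff mult.commute)
qed

lemma psd_congruence:
  fixes S M :: "real^'n^'n"
  assumes "psd S"
  shows "psd (M ** S ** transpose M)"
proof -
  have "z \<bullet> ((M ** S ** transpose M) *v z) = (transpose M *v z) \<bullet> (S *v (transpose M *v z))" for z
  proof -
    have "z \<bullet> ((M ** S ** transpose M) *v z) = (z v* M) \<bullet> (S *v (transpose M *v z))"
      by (simp add: matrix_vector_mul_assoc[symmetric] dot_lmul_matrix matrix_mul_assoc)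
    also have "z v* M = transpose M *v z"
      using vector_transpose_matrix[of z "transpose M"] by simp
    finally show ?thesis .
  qed
  then show ?thesis
    using assms by (simp add: psd_def symmetric_mat_def matrix_transpose_mul matrix_mul_assoc)
qed

lemma matrix_add_rdistrib: "(A + B) ** C = A ** C + B ** C"
  by (simp add: matrix_matrix_mult_def vec_eq_iff distrib_right sum.distrib)

lemma congruence_curve_eq:
  fixes S Y :: "real^'n^'n"
  assumes "symmetric_mat S"
  shows "(mat 1 + t *\<^sub>R Y) ** S ** transpose (mat 1 + t *\<^sub>R Y)
    = S + t *\<^sub>R (Y ** S + transpose (Y ** S)) + t\<^sup>2 *\<^sub>R (Y ** S ** transpose Y)"
proof -
  have tr: "transpose (mat 1 + t *\<^sub>R Y) = mat 1 + t *\<^sub>R transpose Y"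
    by (simp add: transpose_def mat_def vec_eq_iff)
  have "S ** transpose Y = transpose (Y ** S)"
    using assms by (simp add: matrix_transpose_mul symmetric_mat_def)
  then show ?thesis
    unfolding tr matrix_add_rdistrib matrix_add_ldistrib
    by (simp add: matrix_scalar_ac scalar_matrix_assoc[symmetric] matrix_mul_assoc
        power2_eq_square algebra_simps)
qed

lemma matrix_vector_mult_axis: "(M *v axis j c) $ i = M$i$j * c"
  by (simp add: matrix_vector_mult_def axis_def mult_delta_right)

lemma quadratic_form_add_axis:
  fixes M :: "real^'n^'n"
  assumes "symmetric_mat M"
  shows "(x + axis a l) \<bullet> (M *v (x + axis a l)) = x \<bullet> (M *v x) + 2 * l * (M *v x)$a + l\<^sup>2 * M$a$a"
proof -
  have "x \<bullet> (M *v axis a l) = l * (M *v x)$a"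
    unfolding inner_vec_def matrix_vector_mult_axis
    using assms by (simp add: matrix_vector_mult_def symmetric_mat_iff sum_distrib_left mult_ac)
  then show ?thesis
    by (simp add: matrix_vector_right_distrib inner_add_left inner_add_right inner_axis'
        matrix_vector_mult_axis power2_eq_square)
qed

lemma psd_diagonal_nonneg:
  fixes M :: "real^'n^'n"
  assumes "psd M"
  shows "0 \<le> M$i$i"
proof -
  have "0 \<le> axis i 1 \<bullet> (M *v axis i 1)"
    using assms by (simp add: psd_def)
  then show ?thesis
    by (simp add: inner_axis' matrix_vector_mult_axis)
qed

lemma psd_zero_diagonal_imp_zero_row:
  fixes M :: "real^'n^'n"
  assumes "psd M" "M$a$a = 0"
  shows "M$a$j = 0"
proof (rule ccontr)
  assume nz: "M$a$j \<noteq> 0"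
  define l where "l = - (M$j$j + 1) / (2 * M$a$j)"
  have "0 \<le> (axis j 1 + axis a l) \<bullet> (M *v (axis j 1 + axis a l))"
    using assms(1) by (simp add: psd_def)
  also have "\<dots> = M$j$j + 2 * l * M$a$j"
    using assms by (simp add: psd_def quadratic_form_add_axis inner_axis' matrix_vector_mult_axis)
  also have "\<dots> = -1"
    using nz by (simp add: l_def field_simps)
  finally show False by simp
qed

lemma psd_schur_complement:
  fixes M :: "real^'n^'n"
  assumes "psd M" "M$a$a > 0"
  shows "psd (\<chi> i j. M$i$j - M$i$a * M$a$j / M$a$a)"
proof -
  let ?m = "M$a$a"
  have sym: "symmetric_mat M" using assms(1) by (simp add: psd_def)
  have "0 \<le> x \<bullet> ((\<chi> i j. M$i$j - M$i$a * M$a$j / ?m) *v x)" for x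
  proof -
    define r where "r = (M *v x)$a"
    have "0 \<le> (x + axis a (- r / ?m)) \<bullet> (M *v (x + axis a (- r / ?m)))"
      using assms(1) by (simp add: psd_def)
    also have "\<dots> = x \<bullet> (M *v x) - r\<^sup>2 / ?m"
      using assms(2) by (simp add: quadratic_form_add_axis[OF sym] r_def field_simps power2_eq_square)
    also have "r\<^sup>2 = (\<Sum>i\<in>UNIV. \<Sum>j\<in>UNIV. x$i * (M$i$a * M$a$j) * x$j)"
      using sym by (simp add: r_def matrix_vector_mult_def power2_eq_square sum_product
          symmetric_mat_iff mult_ac)
    also have "x \<bullet> (M *v x) - \<dots> / ?m = x \<bullet> ((\<chi> i j. M$i$j - M$i$a * M$a$j / ?m) *v x)"
      unfolding quadratic_form_eq_sum
      by (simp add: sum_subtractf sum_divide_distrib right_diff_distrib left_diff_distrib)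
    finally show ?thesis .
  qed
  moreover have "symmetric_mat (\<chi> i j. M$i$j - M$i$a * M$a$j / ?m)"
    using sym by (simp add: symmetric_mat_iff mult.commute)
  ultimately show ?thesis by (simp add: psd_def)
qed

text \<open>Stated for matrices whose rows outside \<open>I\<close> vanish, so that the proof can induct on \<open>I\<close>,
  splitting off one row at a time by a Schur complement.\<close>

lemma psd_supported_eq_sum_outer_products:
  fixes M :: "real^'n^'n"
  assumes "psd M" and "\<And>i j. i \<notin> I \<Longrightarrow> M$i$j = 0"
  shows "\<exists>v. \<forall>i j. M$i$j = (\<Sum>k\<in>I. v k $ i * v k $ j)"
proof -
  have "finite I" by simp
  then show ?thesis
    using assms
  proof (induction I arbitrary: M rule: finite_induct)
    case empty
    then show ?case by simp
  next
    case (insert a I)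
    have sym: "M$i$j = M$j$i" for i j
      using insert.prems(1) by (simp add: psd_def symmetric_mat_iff)
    from psd_diagonal_nonneg[OF insert.prems(1), of a] consider "M$a$a = 0" | "M$a$a > 0" by linarith
    then show ?case
    proof cases
      case 1
      have zero: "M$i$j = 0" if "i \<notin> I" for i j
        using insert.prems(2) psd_zero_diagonal_imp_zero_row[OF insert.prems(1) 1] that
        by (cases "i = a") auto
      obtain v where v: "\<forall>i j. M$i$j = (\<Sum>k\<in>I. v k $ i * v k $ j)"
        using insert.IH[OF insert.prems(1) zero] by blast
      have "M$i$j = (\<Sum>k\<in>insert a I. (v(a := 0)) k $ i * (v(a := 0)) k $ j)" for i j
        using insert.hyps v by (simp add: sum.insert) (intro sum.cong, auto)
      then show ?thesis by blast
    next
      case 2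
      define u where "u = (\<chi> i. M$i$a / sqrt (M$a$a))"
      define M' where "M' = (\<chi> i j. M$i$j - M$i$a * M$a$j / M$a$a)"
      have "psd M'"
        unfolding M'_def using insert.prems(1) 2 by (rule psd_schur_complement)
      moreover have "M'$i$j = 0" if "i \<notin> I" for i j
        using insert.prems(2) that 2 by (cases "i = a") (auto simp: M'_def)
      ultimately obtain v where v: "\<forall>i j. M'$i$j = (\<Sum>k\<in>I. v k $ i * v k $ j)"
        using insert.IH by blast
      have "M$i$j = (\<Sum>k\<in>insert a I. (v(a := u)) k $ i * (v(a := u)) k $ j)" for i j
      proof -
        have "(\<Sum>k\<in>insert a I. (v(a := u)) k $ i * (v(a := u)) k $ j) = u$i * u$j + M'$i$j"
          using insert.hyps v by (simp add: sum.insert) (intro sum.cong, auto)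
        also have "\<dots> = M$i$j"
          using 2 sym[of a j] by (simp add: u_def M'_def real_sqrt_mult[symmetric])
        finally show ?thesis by simp
      qed
      then show ?thesis by blast
    qed
  qed
qed

lemma psd_eq_sum_outer_products:
  fixes M :: "real^'n^'n"
  assumes "psd M"
  shows "\<exists>v::'n \<Rightarrow> real^'n. \<forall>i j. M$i$j = (\<Sum>k\<in>UNIV. v k $ i * v k $ j)"
  using psd_supported_eq_sum_outer_products[OF assms, of UNIV] by simp

lemma inner_psd_nonneg:
  fixes X T :: "real^'n^'n"
  assumes "psd X" "psd T"
  shows "0 \<le> X \<bullet> T"
proof -
  obtain v :: "'n \<Rightarrow> real^'n" where v: "\<forall>i j. T$i$j = (\<Sum>k\<in>UNIV. v k $ i * v k $ j)"
    using psd_eq_sum_outer_products[OF assms(2)] by blast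
  have "X \<bullet> T = (\<Sum>i\<in>UNIV. \<Sum>j\<in>UNIV. \<Sum>k\<in>UNIV. v k $ i * X$i$j * v k $ j)"
    by (simp add: inner_matrix_eq_sum v sum_distrib_left mult_ac)
  also have "\<dots> = (\<Sum>k\<in>UNIV. \<Sum>i\<in>UNIV. \<Sum>j\<in>UNIV. v k $ i * X$i$j * v k $ j)"
    by (subst sum.swap) (rule sum.cong[OF refl], rule sum.swap)
  also have "\<dots> = (\<Sum>k\<in>UNIV. v k \<bullet> (X *v v k))"
    by (simp add: quadratic_form_eq_sum)
  also have "\<dots> \<ge> 0"
    using assms(1) by (intro sum_nonneg) (simp add: psd_def)
  finally show ?thesis .
qed

section \<open>Minimizing a convex quadratic\<close>

lemma nonneg_if_small_quadratic_nonneg: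
  fixes g c :: real
  assumes "\<And>u. 0 < u \<Longrightarrow> u \<le> 1 \<Longrightarrow> 0 \<le> u * g + u\<^sup>2 * c"
  shows "0 \<le> g"
proof (rule tendsto_lowerbound)
  show "((\<lambda>u. g + u * c) \<longlongrightarrow> g) (at_right 0)"
    by (auto intro!: tendsto_eq_intros)
  have "0 \<le> g + u * c" if "0 < u" "u < 1" for u
  proof -
    have "0 \<le> u * (g + u * c)"
      using assms[of u] that by (simp add: power2_eq_square algebra_simps)
    then show ?thesis
      using that by (simp add: zero_le_mult_iff)
  qed
  then show "\<forall>\<^sub>F u in at_right 0. 0 \<le> g + u * c"
    using eventually_at_right_real[of 0 1] by (auto elim: eventually_mono)
qed (simp add: trivial_limit_at_right_real)

lemma convex_quadratic_min_iff_linear_min: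
  fixes f :: "'a::real_inner \<Rightarrow> real"
  assumes "convex K" "S \<in> K" "0 \<le> c"
    and f: "\<And>T. f T - f S = G \<bullet> (T - S) + c * (norm (T - S))\<^sup>2"
  shows "(\<forall>T\<in>K. f S \<le> f T) \<longleftrightarrow> (\<forall>T\<in>K. G \<bullet> S \<le> G \<bullet> T)"
proof
  assume "\<forall>T\<in>K. G \<bullet> S \<le> G \<bullet> T"
  then show "\<forall>T\<in>K. f S \<le> f T"
    using f assms(3) by (smt (verit) inner_diff_right mult_nonneg_nonneg zero_le_power2)
next
  assume min: "\<forall>T\<in>K. f S \<le> f T"
  show "\<forall>T\<in>K. G \<bullet> S \<le> G \<bullet> T"
  proof
    fix T assume "T \<in> K"
    have "0 \<le> u * (G \<bullet> (T - S)) + u\<^sup>2 * (c * (norm (T - S))\<^sup>2)" if "0 < u" "u \<le> 1" for u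
    proof -
      have "S + u *\<^sub>R (T - S) \<in> K"
        using convexD_alt[OF assms(1,2) \<open>T \<in> K\<close>, of u] that by (simp add: algebra_simps)
      then have "0 \<le> f (S + u *\<^sub>R (T - S)) - f S"
        using min by auto
      also have "\<dots> = u * (G \<bullet> (T - S)) + u\<^sup>2 * (c * (norm (T - S))\<^sup>2)"
        using that by (simp add: f power_mult_distrib)
      finally show ?thesis .
    qed
    then have "0 \<le> G \<bullet> (T - S)"
      by (rule nonneg_if_small_quadratic_nonneg)
    then show "G \<bullet> S \<le> G \<bullet> T"
      by (simp add: inner_diff_right)
  qed
qed

section \<open>Linear functionals on the elliptope\<close>

lemma convex_elliptope: "convex elliptope"
proof (rule convexI)
  fix S T :: "real^'n^'n" and u v :: real
  assume "S \<in> elliptope" "T \<in> elliptope" "0 \<le> u" "0 \<le> v" "u + v = 1"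
  then show "u *\<^sub>R S + v *\<^sub>R T \<in> elliptope"
    by (auto simp: elliptope_def intro: psd_add psd_scaleR)
qed

definition diag_normalize :: "real^'n^'n \<Rightarrow> real^'n^'n" where
  "diag_normalize P = (\<chi> i j. P$i$j / sqrt (P$i$i * P$j$j))"

lemma diag_normalize_in_elliptope:
  fixes P :: "real^'n^'n"
  assumes "psd P" "\<And>i. P$i$i > 0"
  shows "diag_normalize P \<in> elliptope"
proof -
  define w where "w x = (\<chi> i. x$i / sqrt (P$i$i))" for x :: "real^'n"
  have "x \<bullet> (diag_normalize P *v x) = w x \<bullet> (P *v w x)" for x
    unfolding quadratic_form_eq_sum w_def diag_normalize_def
    by (intro sum.cong refl) (simp add: real_sqrt_mult)
  moreover have "symmetric_mat (diag_normalize P)"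
    using assms(1) by (simp add: psd_def symmetric_mat_iff diag_normalize_def mult.commute)
  moreover have "diag_normalize P $ i $ i = 1" for i
    using assms(2)[of i] by (simp add: diag_normalize_def real_sqrt_mult[symmetric])
  ultimately show ?thesis
    using assms(1) by (simp add: elliptope_def psd_def)
qed

lemma has_real_derivative_nonneg_if_right_min:
  assumes "(h has_real_derivative D) (at 0)" and "\<forall>\<^sub>F t in at_right 0. h 0 \<le> h t"
  shows "0 \<le> D"
proof (rule tendsto_lowerbound)
  show "((\<lambda>t. (h (0 + t) - h 0) / t) \<longlongrightarrow> D) (at_right 0)"
    using assms(1) unfolding DERIV_def by (rule tendsto_mono[OF at_within_le_at])
  show "\<forall>\<^sub>F t in at_right 0. 0 \<le> (h (0 + t) - h 0) / t"
    using assms(2) eventually_at_right_less[of 0] by eventually_elim simp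
qed (simp add: trivial_limit_at_right_real)

lemma has_real_derivative_normalized_entry:
  fixes s a b c e f g :: real
  shows "((\<lambda>t. (s + t * a + t\<^sup>2 * b) / sqrt ((1 + t * c + t\<^sup>2 * e) * (1 + t * f + t\<^sup>2 * g)))
           has_real_derivative (a - s * (c + f) / 2)) (at 0)"
  by (rule derivative_eq_intros refl | simp)+

lemma has_real_derivative_inner_diag_normalize_curve:
  fixes G S a b :: "real^'n^'n"
  assumes "\<And>i. S$i$i = 1"
  shows "((\<lambda>t. G \<bullet> diag_normalize (S + t *\<^sub>R a + t\<^sup>2 *\<^sub>R b)) has_real_derivative
           (\<Sum>i\<in>UNIV. \<Sum>j\<in>UNIV. G$i$j * (a$i$j - S$i$j * (a$i$i + a$j$j) / 2))) (at 0)"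
proof -
  have "(\<lambda>t. G \<bullet> diag_normalize (S + t *\<^sub>R a + t\<^sup>2 *\<^sub>R b)) =
    (\<lambda>t. \<Sum>i\<in>UNIV. \<Sum>j\<in>UNIV. G$i$j * ((S$i$j + t * a$i$j + t\<^sup>2 * b$i$j) /
       sqrt ((1 + t * a$i$i + t\<^sup>2 * b$i$i) * (1 + t * a$j$j + t\<^sup>2 * b$j$j))))"
    by (simp add: inner_matrix_eq_sum diag_normalize_def assms)
  then show ?thesis
    by (simp only:) (intro DERIV_sum DERIV_cmult has_real_derivative_normalized_entry)
qed

lemma sum_diag_normalize_derivative_eq_inner:
  fixes G S a :: "real^'n^'n"
  assumes "symmetric_mat G" "symmetric_mat S"
  shows "(\<Sum>i\<in>UNIV. \<Sum>j\<in>UNIV. G$i$j * (a$i$j - S$i$j * (a$i$i + a$j$j) / 2))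
    = (G - Diag_mat (G ** S)) \<bullet> a"
proof -
  have G: "G$i$j = G$j$i" and S: "S$i$j = S$j$i" for i j
    using assms by (auto simp: symmetric_mat_iff)
  have row: "(\<Sum>i\<in>UNIV. \<Sum>j\<in>UNIV. G$i$j * S$i$j * a$i$i) = (\<Sum>i\<in>UNIV. (G ** S)$i$i * a$i$i)"
    by (simp add: matrix_matrix_mult_def sum_distrib_left sum_distrib_right S mult_ac)
  have "(\<Sum>i\<in>UNIV. \<Sum>j\<in>UNIV. G$i$j * S$i$j * a$j$j) = (\<Sum>j\<in>UNIV. \<Sum>i\<in>UNIV. G$j$i * S$j$i * a$j$j)"
    by (subst sum.swap) (simp add: G S)
  also have "\<dots> = (\<Sum>i\<in>UNIV. (G ** S)$i$i * a$i$i)"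
    using row by simp
  finally have col: "(\<Sum>i\<in>UNIV. \<Sum>j\<in>UNIV. G$i$j * S$i$j * a$j$j) = (\<Sum>i\<in>UNIV. (G ** S)$i$i * a$i$i)" .
  have "(\<Sum>i\<in>UNIV. \<Sum>j\<in>UNIV. G$i$j * (a$i$j - S$i$j * (a$i$i + a$j$j) / 2))
    = (\<Sum>i\<in>UNIV. \<Sum>j\<in>UNIV. G$i$j * a$i$j - G$i$j * S$i$j * a$i$i / 2 - G$i$j * S$i$j * a$j$j / 2)"
    by (intro sum.cong refl) (simp add: field_simps)
  also have "\<dots> = G \<bullet> a - (\<Sum>i\<in>UNIV. \<Sum>j\<in>UNIV. G$i$j * S$i$j * a$i$i) / 2
                    - (\<Sum>i\<in>UNIV. \<Sum>j\<in>UNIV. G$i$j * S$i$j * a$j$j) / 2"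
    by (simp add: inner_matrix_eq_sum sum_subtractf sum_divide_distrib)
  also have "\<dots> = (G - Diag_mat (G ** S)) \<bullet> a"
    by (simp add: row col inner_diff_left inner_Diag_mat)
  finally show ?thesis .
qed

lemma elliptope_min_first_order:
  fixes G S a b :: "real^'n^'n"
  assumes "symmetric_mat G" "S \<in> elliptope"
    and min: "\<forall>T\<in>elliptope. G \<bullet> S \<le> G \<bullet> T"
    and curve: "\<And>t. 0 < t \<Longrightarrow> psd (S + t *\<^sub>R a + t\<^sup>2 *\<^sub>R b)"
  shows "0 \<le> (G - Diag_mat (G ** S)) \<bullet> a"
proof -
  let ?P = "\<lambda>t. S + t *\<^sub>R a + t\<^sup>2 *\<^sub>R b"
  have Sd: "S$i$i = 1" for i
    using assms(2) by (simp add: elliptope_def)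
  have "\<forall>\<^sub>F t in at_right 0. \<forall>i. ?P t $i$i > 0"
  proof (rule eventually_all_finite)
    fix i
    have "((\<lambda>t. ?P t $i$i) \<longlongrightarrow> ?P 0 $i$i) (at_right 0)"
      by (auto intro!: tendsto_eq_intros)
    then show "\<forall>\<^sub>F t in at_right 0. ?P t $i$i > 0"
      by (rule order_tendstoD) (simp add: Sd)
  qed
  then have right_min: "\<forall>\<^sub>F t in at_right 0. G \<bullet> diag_normalize (?P 0) \<le> G \<bullet> diag_normalize (?P t)"
    using eventually_at_right_less[of 0]
  proof eventually_elim
    case (elim t)
    have "diag_normalize (?P 0) = S"
      by (simp add: diag_normalize_def Sd vec_eq_iff)
    moreover have "diag_normalize (?P t) \<in> elliptope"
      using elim curve by (intro diag_normalize_in_elliptope) auto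
    ultimately show ?case using min by simp
  qed
  have "0 \<le> (\<Sum>i\<in>UNIV. \<Sum>j\<in>UNIV. G$i$j * (a$i$j - S$i$j * (a$i$i + a$j$j) / 2))"
    using has_real_derivative_inner_diag_normalize_curve[OF Sd] right_min
    by (rule has_real_derivative_nonneg_if_right_min)
  also have "\<dots> = (G - Diag_mat (G ** S)) \<bullet> a"
    using assms(1,2) by (simp add: sum_diag_normalize_derivative_eq_inner elliptope_def psd_def)
  finally show ?thesis .
qed

lemma elliptope_min_if_psd:
  fixes G S :: "real^'n^'n"
  defines "X \<equiv> G - Diag_mat (G ** S)"
  assumes "S \<in> elliptope" "psd X" "X ** S = 0"
  shows "\<forall>T\<in>elliptope. G \<bullet> S \<le> G \<bullet> T"
proof
  fix T :: "real^'n^'n"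
  assume "T \<in> elliptope"
  have G: "G \<bullet> U = X \<bullet> U + (\<Sum>i\<in>UNIV. (G ** S)$i$i)" if "U \<in> elliptope" for U
    using that by (simp add: X_def inner_diff_left inner_Diag_mat elliptope_def)
  have "X \<bullet> S = (X ** S) \<bullet> mat 1"
    using inner_mult_symmetric[of S X "mat 1"] assms(2) by (simp add: elliptope_def psd_def)
  also have "\<dots> = 0"
    using assms(4) by simp
  finally have "X \<bullet> S = 0" .
  moreover have "0 \<le> X \<bullet> T"
    using assms(3) \<open>T \<in> elliptope\<close> by (intro inner_psd_nonneg) (simp_all add: elliptope_def)
  ultimately show "G \<bullet> S \<le> G \<bullet> T"
    using G[OF assms(2)] G[OF \<open>T \<in> elliptope\<close>] by simp
qed

lemma elliptope_min_imp_mult_eq_0: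
  fixes G S :: "real^'n^'n"
  defines "X \<equiv> G - Diag_mat (G ** S)"
  assumes "symmetric_mat G" "S \<in> elliptope" and min: "\<forall>T\<in>elliptope. G \<bullet> S \<le> G \<bullet> T"
  shows "X ** S = 0"
proof -
  have S: "psd S" "symmetric_mat S"
    using assms(3) by (simp_all add: elliptope_def psd_def)
  have X: "symmetric_mat X"
    unfolding X_def using assms(2) by (rule symmetric_diag_correction)
  have nonneg: "0 \<le> X \<bullet> (Y ** S)" for Y
  proof -
    have "0 \<le> X \<bullet> (Y ** S + transpose (Y ** S))"
      unfolding X_def using assms(2,3) min
    proof (rule elliptope_min_first_order)
      show "psd (S + t *\<^sub>R (Y ** S + transpose (Y ** S)) + t\<^sup>2 *\<^sub>R (Y ** S ** transpose Y))" for t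
        using psd_congruence[OF S(1), of "mat 1 + t *\<^sub>R Y"]
        by (simp only: congruence_curve_eq[OF S(2)])
    qed
    then show ?thesis
      using X by (simp add: inner_add_right inner_transpose_right symmetric_mat_def)
  qed
  have orthogonal: "X \<bullet> (Y ** S) = 0" for Y
    using nonneg[of Y] nonneg[of "(- 1) *\<^sub>R Y"]
    by (simp only: scalar_matrix_assoc[symmetric] inner_scaleR_right mult_minus1)
  have "(X ** S) \<bullet> (X ** S) = X \<bullet> ((X ** S) ** S)"
    by (rule inner_mult_symmetric[OF S(2), symmetric])
  also have "\<dots> = 0"
    by (rule orthogonal)
  finally show ?thesis by simp
qed

lemma elliptope_min_imp_psd:
  fixes G S :: "real^'n^'n"
  defines "X \<equiv> G - Diag_mat (G ** S)"
  assumes "symmetric_mat G" "S \<in> elliptope" and min: "\<forall>T\<in>elliptope. G \<bullet> S \<le> G \<bullet> T"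
  shows "psd X"
proof -
  have "0 \<le> x \<bullet> (X *v x)" for x
  proof -
    have "0 \<le> X \<bullet> (\<chi> i j. x$i * x$j)"
      unfolding X_def using assms(2,3) min
    proof (rule elliptope_min_first_order)
      show "psd (S + t *\<^sub>R (\<chi> i j. x$i * x$j) + t\<^sup>2 *\<^sub>R 0)" if "0 < t" for t
        using assms(3) that
        by (auto simp: elliptope_def intro!: psd_add psd_scaleR psd_outer_product)
    qed
    then show ?thesis
      by (simp add: inner_outer_product)
  qed
  moreover have "symmetric_mat X"
    unfolding X_def using assms(2) by (rule symmetric_diag_correction)
  ultimately show ?thesis
    by (simp add: psd_def)
qed

lemma elliptope_linear_min_iff:
  fixes G S :: "real^'n^'n"
  assumes "symmetric_mat G" "S \<in> elliptope"
  shows "(\<forall>T\<in>elliptope. G \<bullet> S \<le> G \<bullet> T) \<longleftrightarrow>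
    psd (G - Diag_mat (G ** S)) \<and> (G - Diag_mat (G ** S)) ** S = 0"
  using elliptope_min_if_psd elliptope_min_imp_psd elliptope_min_imp_mult_eq_0 assms by blast

theorem lemma3p2:
  fixes A :: "'m::finite \<Rightarrow> real^'n^'n"
    and b :: "real^'m" and C Xt :: "real^'n^'n" and y :: "real^'m"
    and \<sigma> :: real and S :: "real^'n^'n"
  assumes symA: "\<And>i. symmetric_mat (A i)"
    and inv: "invertible (AAstar A)"
    and symC: "symmetric_mat C"
    and symXt: "symmetric_mat Xt"
    and sig: "\<sigma> > 0"
    and SM: "S \<in> elliptope"
  defines "D \<equiv> opAstar A (matrix_inv (AAstar A) *v b)"
  defines "\<Phi> \<equiv> \<lambda>T. frob_inner D (T + C) - frob_inner Xt (opAstar A y - T - C)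
                     + \<sigma> / 2 * frob_sq (opAstar A y - T - C)"
  defines "G \<equiv> Xt - \<sigma> *\<^sub>R (opAstar A y - S - C) + D"
  shows "(\<forall>T\<in>elliptope. \<Phi> S \<le> \<Phi> T) \<longleftrightarrow>
         (psd (G - Diag_mat (G ** S)) \<and> (G - Diag_mat (G ** S)) ** S = 0)"
proof -
  \<comment> \<open>Only the symmetry of \<open>D\<close> matters.\<close>
  have "symmetric_mat (opAstar A w)" for w
    using symA by (rule symmetric_opAstar)
  then have "symmetric_mat G"
    using symC symXt SM
    by (simp add: G_def D_def elliptope_def psd_def symmetric_mat_iff)
  moreover have "\<Phi> T - \<Phi> S = G \<bullet> (T - S) + \<sigma> / 2 * (norm (T - S))\<^sup>2" for T
    by (simp add: \<Phi>_def G_def frob_inner_eq_inner frob_sq_eq_norm power2_norm_eq_inner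
        inner_diff_left inner_diff_right inner_add_left inner_add_right inner_commute algebra_simps)
  ultimately show ?thesis
    using convex_quadratic_min_iff_linear_min[OF convex_elliptope SM, of "\<sigma> / 2" \<Phi> G]
      elliptope_linear_min_iff[of G S] SM sig by simp
qed

end
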